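(* Let $S$ be a right non-degenerate semigroup of skew type. Then $S$ satisfies the ascending chain condition on right ideals.
   Context: A semigroup of skew type is a monoid $S$ with a monoid presentation $S=\langle x_1,\ldots,x_n \mid x_ix_j=x_kx_l\rangle$ consisting of $\binom{n}{2}$ relations, each of the form $x_ix_j=x_kx_l$ with $i\neq j$, $k\neq l$, such that every word $x_px_q$ with $p\neq q$ appears (as one side) in exactly one of the relations; $X=\{x_1,\ldots,x_n\}$. For $a,b\in X$, the partner of $ab$ is the other side of the unique defining relation containing $ab$ if $a\neq b$, and $ab$ itself if $a=b$. $S$ is right non-degenerate if for every $x\in X$ the map $X\to X$ sending $y$ to the first letter of the partner of $xy$ is surjective. *)

theory Defs
  imports Main
begin

text \<open>Generators are the elements of a finite type 'a; words are lists over 'a.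
A set of defining relations is a set of pairs of two-letter words
((i,j),(k,l)) standing for the relation x_i x_j = x_k x_l.\<close>

type_synonym 'a skew_rels = "(('a \<times> 'a) \<times> ('a \<times> 'a)) set"

definition skew_type_rels :: "'a::finite skew_rels \<Rightarrow> bool" where
  "skew_type_rels R \<longleftrightarrow>
     card R = card (UNIV :: 'a set) choose 2 \<and>
     (\<forall>((i,j),(k,l)) \<in> R. i \<noteq> j \<and> k \<noteq> l) \<and>
     (\<forall>p q. p \<noteq> q \<longrightarrow> (\<exists>!rel. rel \<in> R \<and> (fst rel = (p,q) \<or> snd rel = (p,q))))"

definition pres_step :: "'a skew_rels \<Rightarrow> ('a list \<times> 'a list) set" where
  "pres_step R = {(u @ [a,b] @ v, u @ [c,d] @ v) | u v a b c d. ((a,b),(c,d)) \<in> R}"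

definition pres_cong :: "'a skew_rels \<Rightarrow> ('a list \<times> 'a list) set" where
  "pres_cong R = (pres_step R \<union> (pres_step R)\<inverse>)\<^sup>*"

definition pres_monoid :: "'a skew_rels \<Rightarrow> 'a list set set" where
  "pres_monoid R = UNIV // pres_cong R"

definition pres_mult :: "'a skew_rels \<Rightarrow> 'a list set \<Rightarrow> 'a list set \<Rightarrow> 'a list set" where
  "pres_mult R s t = (\<Union>x\<in>s. \<Union>y\<in>t. pres_cong R `` {x @ y})"

definition right_ideal :: "'a skew_rels \<Rightarrow> 'a list set set \<Rightarrow> bool" where
  "right_ideal R I \<longleftrightarrow> I \<subseteq> pres_monoid R \<and>
     (\<forall>s\<in>I. \<forall>t\<in>pres_monoid R. pres_mult R s t \<in> I)"

definition acc_right_ideals :: "'a skew_rels \<Rightarrow> bool" where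
  "acc_right_ideals R \<longleftrightarrow>
     (\<forall>f :: nat \<Rightarrow> 'a list set set.
        (\<forall>n. right_ideal R (f n)) \<and> (\<forall>n. f n \<subseteq> f (Suc n)) \<longrightarrow>
        (\<exists>N. \<forall>m\<ge>N. f m = f N))"

definition partner :: "'a skew_rels \<Rightarrow> 'a \<times> 'a \<Rightarrow> 'a \<times> 'a" where
  "partner R w = (if fst w = snd w then w
     else (THE w'. (w, w') \<in> R \<or> (w', w) \<in> R))"

definition right_nondegenerate :: "'a skew_rels \<Rightarrow> bool" where
  "right_nondegenerate R \<longleftrightarrow> (\<forall>x. surj (\<lambda>y. fst (partner R (x, y))))"

end

theory Submission
  imports Defs "HOL-Library.Infinite_Set"
begin

(* Write u <= v when v = u g in S. An ascending chain of right ideals that never stabilises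
   yields a sequence t_0, t_1, ... with no i < j such that t_i <= t_j, so it suffices to show
   that every sequence of words f_0, f_1, ... has such a pair. This goes by induction on a set L
   containing every letter that can begin a word equal in S to some f_j. If there is no such
   pair, a pigeonhole argument gives a prefix u of f_0, followed in f_0 by a letter c, such that
   infinitely many f_j equal u h_j in S while u c divides none of them. Pushing a letter d of
   h_j leftwards through u puts sigma_u(d) in front, where sigma_u is a composite of the maps
   y |-> first letter of the partner of xy, which are bijections by right non-degeneracy.
   Hence the letters that can begin the h_j lie in sigma_u^-1(L) - {c}, a smaller set. *)

lemma pres_step_context:
  assumes "(a, b) \<in> pres_step R"
  shows "(u @ a @ v, u @ b @ v) \<in> pres_step R"
proof -
  from assms obtain u' v' x y c d where
    "a = u' @ [x, y] @ v'" "b = u' @ [c, d] @ v'" "((x, y), (c, d)) \<in> R"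
    unfolding pres_step_def by blast
  then have "u @ a @ v = (u @ u') @ [x, y] @ (v' @ v)" "u @ b @ v = (u @ u') @ [c, d] @ (v' @ v)"
    by simp_all
  with \<open>((x, y), (c, d)) \<in> R\<close> show ?thesis
    unfolding pres_step_def by blast
qed

lemma pres_cong_context:
  assumes "(a, b) \<in> pres_cong R"
  shows "(u @ a @ v, u @ b @ v) \<in> pres_cong R"
  using assms unfolding pres_cong_def
proof (induction rule: rtrancl_induct)
  case (step y z)
  then have "(u @ y @ v, u @ z @ v) \<in> pres_step R \<union> (pres_step R)\<inverse>"
    using pres_step_context by blast
  with step.IH show ?case by (rule rtrancl_into_rtrancl)
qed simp

lemma equiv_pres_cong: "equiv UNIV (pres_cong R)"
  unfolding pres_cong_def
  by (rule equivI) (auto intro: refl_rtrancl sym_rtrancl sym_Un_converse trans_rtrancl)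

lemma pres_cong_refl: "(a, a) \<in> pres_cong R"
  unfolding pres_cong_def by simp

lemma pres_cong_sym: "(a, b) \<in> pres_cong R \<Longrightarrow> (b, a) \<in> pres_cong R"
  using equiv_pres_cong by (blast elim: equivE dest: symD)

lemma pres_cong_trans:
  "(a, b) \<in> pres_cong R \<Longrightarrow> (b, c) \<in> pres_cong R \<Longrightarrow> (a, c) \<in> pres_cong R"
  unfolding pres_cong_def by (rule rtrancl_trans)

lemma pres_cong_append:
  assumes "(a, b) \<in> pres_cong R" "(c, d) \<in> pres_cong R"
  shows "(a @ c, b @ d) \<in> pres_cong R"
  using pres_cong_context[OF assms(1), of "[]" c] pres_cong_context[OF assms(2), of b "[]"]
  by (auto intro: pres_cong_trans)

lemma pres_mult_classes:
  "pres_mult R (pres_cong R `` {a}) (pres_cong R `` {b}) = pres_cong R `` {a @ b}"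
  unfolding pres_mult_def
  by (auto intro: pres_cong_refl pres_cong_trans pres_cong_append)

lemma ex1_other_side:
  fixes R :: "'b rel"
  assumes "\<exists>!rel. rel \<in> R \<and> (fst rel = p \<or> snd rel = p)"
  shows "\<exists>!w. (p, w) \<in> R \<or> (w, p) \<in> R"
proof -
  from assms obtain a b where rel: "(a, b) \<in> R" "a = p \<or> b = p"
    and unique: "\<And>r. r \<in> R \<Longrightarrow> fst r = p \<or> snd r = p \<Longrightarrow> r = (a, b)"
    by (metis prod.collapse)
  show ?thesis
  proof (rule ex1I)
    show "(p, if a = p then b else a) \<in> R \<or> (if a = p then b else a, p) \<in> R"
      using rel by auto
  next
    fix w assume "(p, w) \<in> R \<or> (w, p) \<in> R"
    then have "(p, w) = (a, b) \<or> (w, p) = (a, b)"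
      using unique by fastforce
    then show "w = (if a = p then b else a)"
      by auto
  qed
qed

lemma pres_cong_partner:
  assumes "skew_type_rels R" and "partner R (x, y) = (a, b)"
  shows "([x, y], [a, b]) \<in> pres_cong R"
proof (cases "x = y")
  case True
  with assms(2) show ?thesis
    unfolding partner_def by (auto simp: pres_cong_refl)
next
  case False
  let ?P = "\<lambda>w. ((x, y), w) \<in> R \<or> (w, (x, y)) \<in> R"
  have "\<exists>!rel. rel \<in> R \<and> (fst rel = (x, y) \<or> snd rel = (x, y))"
    using assms(1) False unfolding skew_type_rels_def by blast
  then have "?P (THE w. ?P w)"
    by (rule theI'[OF ex1_other_side])
  then have "([x, y], [a, b]) \<in> pres_step R \<union> (pres_step R)\<inverse>"
    using assms(2) False unfolding partner_def pres_step_def by fastforce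
  then show ?thesis
    unfolding pres_cong_def by blast
qed

(* In the usual notation x y = sigma_x(y) tau_y(x). *)
definition sigma :: "'a skew_rels \<Rightarrow> 'a \<Rightarrow> 'a \<Rightarrow> 'a" where
  "sigma R x y = fst (partner R (x, y))"

fun sigma_word :: "'a skew_rels \<Rightarrow> 'a list \<Rightarrow> 'a \<Rightarrow> 'a" where
  "sigma_word R [] = id"
| "sigma_word R (a # u) = sigma R a \<circ> sigma_word R u"

lemma inj_sigma_word:
  fixes R :: "'a::finite skew_rels"
  assumes "right_nondegenerate R"
  shows "inj (sigma_word R u)"
proof (induction u)
  case (Cons a u)
  have "inj (sigma R a)"
    using assms unfolding right_nondegenerate_def sigma_def
    by (intro finite_UNIV_surj_inj) auto
  with Cons.IH show ?case
    by (metis inj_compose sigma_word.simps(2))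
qed simp

lemma pres_cong_push_front:
  assumes "skew_type_rels R"
  shows "\<exists>g'. (u @ c # g, sigma_word R u c # g') \<in> pres_cong R"
proof (induction u)
  case Nil
  show ?case by (auto intro: pres_cong_refl)
next
  case (Cons a u)
  let ?d = "sigma_word R u c" and ?b = "snd (partner R (a, sigma_word R u c))"
  from Cons obtain g' where "(u @ c # g, ?d # g') \<in> pres_cong R"
    by blast
  then have "(a # u @ c # g, [a, ?d] @ g') \<in> pres_cong R"
    using pres_cong_context[of _ _ R "[a]" "[]"] by simp
  moreover have "partner R (a, ?d) = (sigma_word R (a # u) c, ?b)"
    by (simp add: sigma_def)
  then have "([a, ?d] @ g', [sigma_word R (a # u) c, ?b] @ g') \<in> pres_cong R"
    by (rule pres_cong_append[OF pres_cong_partner[OF assms] pres_cong_refl])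
  ultimately have "(a # u @ c # g, sigma_word R (a # u) c # ?b # g') \<in> pres_cong R"
    by (auto intro: pres_cong_trans)
  then show ?case
    by auto
qed

definition initial_letters :: "'a skew_rels \<Rightarrow> 'a list \<Rightarrow> 'a set" where
  "initial_letters R v = {c. \<exists>g. (v, c # g) \<in> pres_cong R}"

definition left_divides :: "'a skew_rels \<Rightarrow> 'a list \<Rightarrow> 'a list \<Rightarrow> bool" where
  "left_divides R u v \<longleftrightarrow> (\<exists>g. (u @ g, v) \<in> pres_cong R)"

lemma initial_letters_cong:
  assumes "(v, v') \<in> pres_cong R"
  shows "initial_letters R v = initial_letters R v'"
  using assms pres_cong_sym pres_cong_trans unfolding initial_letters_def by blast

lemma sigma_word_initial_letters:
  assumes "skew_type_rels R"
  shows "sigma_word R u ` initial_letters R v \<subseteq> initial_letters R (u @ v)"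
proof
  fix d assume "d \<in> sigma_word R u ` initial_letters R v"
  then obtain c g where d: "d = sigma_word R u c" and "(v, c # g) \<in> pres_cong R"
    unfolding initial_letters_def by blast
  from this(2) have "(u @ v, u @ c # g) \<in> pres_cong R"
    by (rule pres_cong_append[OF pres_cong_refl])
  moreover obtain g' where "(u @ c # g, d # g') \<in> pres_cong R"
    using pres_cong_push_front[OF assms] d by blast
  ultimately show "d \<in> initial_letters R (u @ v)"
    unfolding initial_letters_def by (blast intro: pres_cong_trans)
qed

lemma left_divides_Nil: "left_divides R [] v"
  unfolding left_divides_def by (auto intro: pres_cong_refl)

lemma left_divides_cong:
  assumes "(u, u') \<in> pres_cong R" and "(v, v') \<in> pres_cong R"
  shows "left_divides R u v \<longleftrightarrow> left_divides R u' v'"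
proof -
  have "left_divides R u' v'"
    if "left_divides R u v" "(u, u') \<in> pres_cong R" "(v, v') \<in> pres_cong R" for u v u' v'
  proof -
    from that(1) obtain g where "(u @ g, v) \<in> pres_cong R"
      unfolding left_divides_def by blast
    moreover have "(u' @ g, u @ g) \<in> pres_cong R"
      using pres_cong_append[OF pres_cong_sym[OF that(2)] pres_cong_refl] .
    ultimately have "(u' @ g, v') \<in> pres_cong R"
      using that(3) pres_cong_trans by blast
    then show ?thesis
      unfolding left_divides_def by blast
  qed
  with assms pres_cong_sym show ?thesis
    by blast
qed

lemma left_divides_append_left:
  assumes "left_divides R v v'"
  shows "left_divides R (u @ v) (u @ v')"
proof -
  from assms obtain g where "(v @ g, v') \<in> pres_cong R"
    unfolding left_divides_def by blast
  then have "(u @ v @ g, u @ v') \<in> pres_cong R"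
    by (rule pres_cong_append[OF pres_cong_refl])
  then show ?thesis
    unfolding left_divides_def by auto
qed

lemma left_divides_snoc_if_initial_letter:
  assumes "c \<in> initial_letters R v"
  shows "left_divides R (u @ [c]) (u @ v)"
proof -
  from assms obtain g where "(v, c # g) \<in> pres_cong R"
    unfolding initial_letters_def by blast
  then have "([c] @ g, v) \<in> pres_cong R"
    by (simp add: pres_cong_sym)
  then show ?thesis
    using left_divides_append_left unfolding left_divides_def by blast
qed

lemma initial_letters_suffix_subset:
  assumes "skew_type_rels R"
    and "initial_letters R (u @ v) \<subseteq> L"
    and "\<not> left_divides R (u @ [c]) (u @ v)"
  shows "initial_letters R v \<subseteq> sigma_word R u -` L - {c}"
proof
  fix d assume d: "d \<in> initial_letters R v"
  then have "sigma_word R u d \<in> L"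
    using sigma_word_initial_letters[OF assms(1)] assms(2) by blast
  moreover have "d \<noteq> c"
    using d assms(3) left_divides_snoc_if_initial_letter by metis
  ultimately show "d \<in> sigma_word R u -` L - {c}"
    by simp
qed

lemma card_vimage_sigma_word_Diff_less:
  fixes R :: "'a::finite skew_rels"
  assumes "right_nondegenerate R" and "sigma_word R u c \<in> L"
  shows "card (sigma_word R u -` L - {c}) < card L"
proof -
  have "inj (sigma_word R u)"
    by (rule inj_sigma_word[OF assms(1)])
  moreover from this have "surj (sigma_word R u)"
    by (simp add: finite_UNIV_inj_surj)
  ultimately have "card (sigma_word R u -` L) = card L"
    by (intro card_vimage_inj) auto
  moreover have "card (sigma_word R u -` L - {c}) < card (sigma_word R u -` L)"
    using assms(2) by (intro card_Diff1_less) auto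
  ultimately show ?thesis
    by simp
qed

lemma strict_mono_subseq_constant:
  fixes idx :: "nat \<Rightarrow> 'b"
  assumes "finite (range idx)"
  obtains e :: "nat \<Rightarrow> nat" and i where "strict_mono e" "\<And>k. idx (e k) = i"
proof -
  obtain i where "infinite (idx -` {i})"
    using inf_img_fin_domE[OF assms infinite_UNIV_nat] by blast
  then obtain e :: "nat \<Rightarrow> nat" where e: "strict_mono e" and "\<forall>k. e k \<in> idx -` {i}"
    using infinite_enumerate by blast
  then have "\<And>k. idx (e k) = i"
    by simp
  with e show ?thesis
    by (rule that)
qed

lemma left_divides_longest_prefix_subseq:
  assumes "\<And>j. \<not> left_divides R w (f j)"
  obtains i and e :: "nat \<Rightarrow> nat" where "i < length w" "strict_mono e"
    "\<And>k. left_divides R (take i w) (f (e k))"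
    "\<And>k. \<not> left_divides R (take (Suc i) w) (f (e k))"
proof -
  have "\<forall>j. \<exists>i. i < length w \<and> left_divides R (take i w) (f j)
      \<and> \<not> left_divides R (take (Suc i) w) (f j)"
  proof
    fix j
    have "\<exists>k < length w. (\<forall>i\<le>k. \<not> \<not> left_divides R (take i w) (f j))
        \<and> \<not> left_divides R (take (Suc k) w) (f j)"
      by (rule ex_least_nat_less[where P = "\<lambda>i. \<not> left_divides R (take i w) (f j)"])
        (use assms[of j] left_divides_Nil in simp_all)
    then show "\<exists>i. i < length w \<and> left_divides R (take i w) (f j)
      \<and> \<not> left_divides R (take (Suc i) w) (f j)"
      by auto
  qed
  from choice[OF this] obtain idx where idx: "\<forall>j. idx j < length w
      \<and> left_divides R (take (idx j) w) (f j) \<and> \<not> left_divides R (take (Suc (idx j)) w) (f j)"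
    by blast
  then have "range idx \<subseteq> {..<length w}"
    by blast
  then have "finite (range idx)"
    by (rule finite_subset) simp
  then obtain e :: "nat \<Rightarrow> nat" and i where e: "strict_mono e" and i: "\<And>k. idx (e k) = i"
    using strict_mono_subseq_constant by blast
  show ?thesis
  proof (rule that[OF _ e])
    show "i < length w"
      using idx[rule_format, of "e 0"] i[of 0] by simp
    show "left_divides R (take i w) (f (e k))" "\<not> left_divides R (take (Suc i) w) (f (e k))" for k
      using idx[rule_format, of "e k"] i[of k] by simp_all
  qed
qed

lemma left_divides_good_if_initial_letters_bounded:
  fixes R :: "'a::finite skew_rels" and f :: "nat \<Rightarrow> 'a list"
  assumes skew: "skew_type_rels R" and nondeg: "right_nondegenerate R"
    and "\<And>j. initial_letters R (f j) \<subseteq> L"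
  shows "\<exists>i j. i < j \<and> left_divides R (f i) (f j)"
  using assms(3)
proof (induction "card L" arbitrary: L f rule: less_induct)
  case less
  show ?case
  proof (rule ccontr)
    assume bad: "\<nexists>i j. i < j \<and> left_divides R (f i) (f j)"
    let ?w = "f 0"
    have "\<And>j. \<not> left_divides R ?w (f (Suc j))"
      using bad by blast
    then obtain i and e :: "nat \<Rightarrow> nat" where i: "i < length ?w" and e: "strict_mono e"
      and prefix: "\<And>k. left_divides R (take i ?w) (f (Suc (e k)))"
      and not_prefix: "\<And>k. \<not> left_divides R (take (Suc i) ?w) (f (Suc (e k)))"
      using left_divides_longest_prefix_subseq[of R ?w "\<lambda>j. f (Suc j)"] by blast
    define u where "u = take i ?w"
    define c where "c = ?w ! i"
    from prefix obtain h where h: "\<And>k. (u @ h k, f (Suc (e k))) \<in> pres_cong R"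
      unfolding left_divides_def u_def by metis
    let ?L' = "sigma_word R u -` L - {c}"
    have "?w = u @ c # drop (Suc i) ?w"
      unfolding u_def c_def using i by (rule id_take_nth_drop)
    then have "sigma_word R u c \<in> initial_letters R ?w"
      using sigma_word_initial_letters[OF skew, of u "c # drop (Suc i) ?w"]
      unfolding initial_letters_def by (force intro: pres_cong_refl)
    then have "card ?L' < card L"
      using less.prems[of 0] card_vimage_sigma_word_Diff_less[OF nondeg] by blast
    moreover have "initial_letters R (h k) \<subseteq> ?L'" for k
    proof (rule initial_letters_suffix_subset[OF skew])
      show "initial_letters R (u @ h k) \<subseteq> L"
        using less.prems initial_letters_cong[OF h] by blast
      have "take (Suc i) ?w = u @ [c]"
        unfolding u_def c_def using i by (simp add: take_Suc_conv_app_nth)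
      then show "\<not> left_divides R (u @ [c]) (u @ h k)"
        using not_prefix left_divides_cong[OF pres_cong_refl h] by metis
    qed
    ultimately obtain k k' where "k < k'" "left_divides R (h k) (h k')"
      using less.hyps by blast
    then have "left_divides R (f (Suc (e k))) (f (Suc (e k')))"
      using left_divides_append_left left_divides_cong[OF h h] by blast
    moreover have "Suc (e k) < Suc (e k')"
      using e \<open>k < k'\<close> by (simp add: strict_mono_less)
    ultimately show False
      using bad by blast
  qed
qed

lemma left_divides_good:
  fixes R :: "'a::finite skew_rels" and f :: "nat \<Rightarrow> 'a list"
  assumes "skew_type_rels R" and "right_nondegenerate R"
  shows "\<exists>i j. i < j \<and> left_divides R (f i) (f j)"
  using left_divides_good_if_initial_letters_bounded[OF assms] by blast

lemma ascending_chain_strict_subseq: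
  fixes F :: "nat \<Rightarrow> 'b set"
  assumes chain: "\<And>n. F n \<subseteq> F (Suc n)" and "\<nexists>N. \<forall>m\<ge>N. F m = F N"
  obtains n :: "nat \<Rightarrow> nat" and t where "strict_mono n"
    "\<And>k. t k \<in> F (n (Suc k))" "\<And>k. t k \<notin> F (n k)"
proof -
  have "\<forall>N. \<exists>m. N < m \<and> F N \<subset> F m"
  proof
    fix N
    from assms(2) obtain m where "N \<le> m" "F m \<noteq> F N"
      by blast
    moreover from \<open>N \<le> m\<close> have "F N \<subseteq> F m"
      by (rule lift_Suc_mono_le[of F, OF chain])
    ultimately show "\<exists>m. N < m \<and> F N \<subset> F m"
      using le_neq_implies_less by blast
  qed
  from choice[OF this] obtain jump where "\<forall>N. N < jump N \<and> F N \<subset> F (jump N)"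
    by blast
  then have jump_gt: "\<And>N. N < jump N" and jump_grows: "\<forall>N. \<exists>x. x \<in> F (jump N) - F N"
    by blast+
  define n where "n k = (jump ^^ k) 0" for k
  have "strict_mono n"
    unfolding strict_mono_Suc_iff n_def using jump_gt by simp
  moreover from choice[OF jump_grows] obtain t where "\<And>N. t N \<in> F (jump N) - F N"
    by blast
  then have "\<And>k. t (n k) \<in> F (n (Suc k))" "\<And>k. t (n k) \<notin> F (n k)"
    unfolding n_def by simp_all
  ultimately show ?thesis
    by (rule that)
qed

lemma right_ideal_closed_left_divides:
  assumes "right_ideal R I" and "pres_cong R `` {x} \<in> I" and "left_divides R x y"
  shows "pres_cong R `` {y} \<in> I"
proof -
  from assms(3) obtain g where g: "(x @ g, y) \<in> pres_cong R"
    unfolding left_divides_def by blast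
  have "pres_cong R `` {g} \<in> pres_monoid R"
    unfolding pres_monoid_def by (rule quotientI) simp
  with assms(1,2) have "pres_mult R (pres_cong R `` {x}) (pres_cong R `` {g}) \<in> I"
    unfolding right_ideal_def by blast
  moreover have "pres_mult R (pres_cong R `` {x}) (pres_cong R `` {g}) = pres_cong R `` {y}"
    unfolding pres_mult_classes by (rule equiv_class_eq[OF equiv_pres_cong g])
  ultimately show ?thesis
    by simp
qed

lemma acc_right_ideals_if_left_divides_good:
  assumes good: "\<And>f :: nat \<Rightarrow> 'a list. \<exists>i j. i < j \<and> left_divides R (f i) (f j)"
  shows "acc_right_ideals R"
  unfolding acc_right_ideals_def
proof (intro allI impI)
  fix F :: "nat \<Rightarrow> 'a list set set"
  assume "(\<forall>n. right_ideal R (F n)) \<and> (\<forall>n. F n \<subseteq> F (Suc n))"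
  then have ideal: "\<And>n. right_ideal R (F n)" and chain: "\<And>n. F n \<subseteq> F (Suc n)"
    by auto
  show "\<exists>N. \<forall>m\<ge>N. F m = F N"
  proof (rule ccontr)
    assume "\<nexists>N. \<forall>m\<ge>N. F m = F N"
    with chain obtain n :: "nat \<Rightarrow> nat" and t where n: "strict_mono n"
      and t_in: "\<And>k. t k \<in> F (n (Suc k))" and t_notin: "\<And>k. t k \<notin> F (n k)"
      using ascending_chain_strict_subseq by blast
    have "t k \<in> pres_monoid R" for k
      using t_in ideal unfolding right_ideal_def by blast
    then have "\<forall>k. \<exists>x. t k = pres_cong R `` {x}"
      unfolding pres_monoid_def quotient_def by blast
    from choice[OF this] obtain x where x: "\<And>k. t k = pres_cong R `` {x k}"
      by blast
    obtain i j where "i < j" "left_divides R (x i) (x j)"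
      using good by blast
    then have "t j \<in> F (n (Suc i))"
      using right_ideal_closed_left_divides[OF ideal] t_in x by metis
    moreover have "F (n (Suc i)) \<subseteq> F (n j)"
      using lift_Suc_mono_le[of F, OF chain] strict_mono_less_eq[OF n] \<open>i < j\<close> by simp
    ultimately show False
      using t_notin by blast
  qed
qed

theorem proposition4p2:
  fixes R :: "'a::finite skew_rels"
  assumes "skew_type_rels R"
    and "right_nondegenerate R"
  shows "acc_right_ideals R"
  by (rule acc_right_ideals_if_left_divides_good) (rule left_divides_good[OF assms])

end
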